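(* Let $n,m\ge1$ and let $v=(v_1,\dots,v_m)$ with $v_j\in\mathbb R^n$ be indeterminates (so $mn$ real coordinates). Let $(a_{ij})$ be a real $n\times m$ matrix of rank $n$, and $t_i=\sum_ja_{ij}v_j$ ($i=1,\dots,n$). Let $b_1,\dots,b_n$ be real linear combinations of the scalar products $(v_h,v_k)$. Let $d(v)$ be the determinant of the $n\times n$ matrix with rows $t_1,\dots,t_n$, and let $x=(f_1/d,\dots,f_n/d)$ (with $f_i$ polynomials in $v$) be the solution, given by Cramer's rule, of the linear system $(x,t_i)=b_i$, $i=1,\dots,n$. Assume there exist $a=\sum_jc_jv_j$ with $c_j\in\mathbb R$ and $b$ a real linear combination of the $(v_h,v_k)$ such that $$|x|^2+(x,a)+b=0$$ identically in $v$. Then $x$ is a polynomial in the coordinates of $v$, i.e. $d$ divides each $f_i$.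
   Context: $(\cdot,\cdot)$ denotes the standard scalar product on $\mathbb R^n$ and $|x|^2=(x,x)$. *)

theory Defs
  imports "HOL-Analysis.Analysis"
begin

text \<open>The indeterminates: v = (v_1,...,v_m), each v_j in R^n, modelled as v :: (real^'n)^'m.
  A :: real^'m^'n is the n x m coefficient matrix (a_ij).\<close>

definition tmat :: "real^'m^'n \<Rightarrow> (real^'n)^'m \<Rightarrow> real^'n^'n" where
  "tmat A v = (\<chi> i. \<Sum>j\<in>UNIV. A $ i $ j *\<^sub>R (v $ j))"

definition sp_comb :: "('m \<Rightarrow> 'm \<Rightarrow> real) \<Rightarrow> (real^'n)^'m \<Rightarrow> real" where
  "sp_comb beta v = (\<Sum>h\<in>UNIV. \<Sum>k\<in>UNIV. beta h k * ((v $ h) \<bullet> (v $ k)))"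

definition rhs :: "('n \<Rightarrow> 'm \<Rightarrow> 'm \<Rightarrow> real) \<Rightarrow> (real^'n)^'m \<Rightarrow> real^'n" where
  "rhs B v = (\<chi> i. sp_comb (B i) v)"

definition cramer_num :: "real^'m^'n \<Rightarrow> ('n \<Rightarrow> 'm \<Rightarrow> 'm \<Rightarrow> real) \<Rightarrow> 'n \<Rightarrow> (real^'n)^'m \<Rightarrow> real" where
  "cramer_num A B k v =
     det (\<chi> i j. if j = k then rhs B v $ i else tmat A v $ i $ j)"

definition cramer_sol :: "real^'m^'n \<Rightarrow> ('n \<Rightarrow> 'm \<Rightarrow> 'm \<Rightarrow> real) \<Rightarrow> (real^'n)^'m \<Rightarrow> real^'n" where
  "cramer_sol A B v = (\<chi> k. cramer_num A B k v / det (tmat A v))"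

end

theory Submission
  imports Defs
begin

(*
  Let Q(r) = rhs_form B r r, the quadratic map R^m -> R^n with the coefficients of b_1, ..., b_n,
  so that b_i(v) = sum_l Q_i(v^l) over the coordinate slices v^l = (v_1l, ..., v_ml).
  Given r in R^m, a unit vector e and a right inverse (s_j) of (a_ij), put v_j = r_j e + eps s_j.
  The system matrix then acts as x |-> (e,x) Ar + eps x, so sum_i z_i b_i = eps (z,x) for every z
  orthogonal to Ar. The relation |x|^2 + (x,a) + b = 0 keeps x bounded as eps -> 0+, and in the
  limit (z,Q(r)) = 0. So Q(r) is parallel to Ar for every r, and for a quadratic map this forces
  Q(r) = phi(r) Ar with phi linear (a coordinate computation, after splitting R^m into ker A and
  a complement). Hence (b_1, ..., b_n) = T w with w_k = phi(v^k), and Cramer's rule gives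
  f_k = d w_k.
*)

lemma linear_eq_scaleR_if_orthogonality_preserving:
  fixes f :: "'a::euclidean_space \<Rightarrow> 'a"
  assumes f: "linear f" and orth: "\<And>z x. z \<bullet> x = 0 \<Longrightarrow> z \<bullet> f x = 0"
  shows "\<exists>\<mu>. \<forall>x. f x = \<mu> *\<^sub>R x"
proof -
  obtain j0 :: 'a where j0: "j0 \<in> Basis"
    using nonempty_Basis by blast
  have off_diag: "i \<bullet> f j = 0" if "i \<in> Basis" "j \<in> Basis" "i \<noteq> j" for i j
    using orth[of i j] that by (simp add: inner_not_same_Basis)
  have diag: "i \<bullet> f i = j \<bullet> f j" if ij: "i \<in> Basis" "j \<in> Basis" for i j
  proof (cases "i = j")
    case False
    have "(i - j) \<bullet> (i + j) = 0"
      using ij by (simp add: inner_simps inner_commute)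
    then have "(i - j) \<bullet> f (i + j) = 0"
      by (rule orth)
    then show ?thesis
      using off_diag[OF ij False] off_diag[of j i] ij False
      by (simp add: linear_add[OF f] inner_simps)
  qed simp
  have "f = (\<lambda>x. (j0 \<bullet> f j0) *\<^sub>R x)"
  proof (rule linear_eq_stdbasis[OF f])
    show "linear (\<lambda>x. (j0 \<bullet> f j0) *\<^sub>R x)"
      by (simp add: linear_scaleR)
    fix j :: 'a
    assume j: "j \<in> Basis"
    show "f j = (j0 \<bullet> f j0) *\<^sub>R j"
    proof (rule euclidean_eqI)
      fix i :: 'a
      assume "i \<in> Basis"
      then show "f j \<bullet> i = (j0 \<bullet> f j0) *\<^sub>R j \<bullet> i"
        using off_diag[of i j] diag[OF j j0] j by (auto simp: inner_commute inner_Basis)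
    qed
  qed
  then show ?thesis
    by (intro exI[of _ "j0 \<bullet> f j0"]) simp
qed

lemma bilinear_diag_add_scaleR:
  assumes b: "bilinear b"
  shows "b (x + s *\<^sub>R y) (x + s *\<^sub>R y) = b x x + s *\<^sub>R (b x y + b y x) + (s * s) *\<^sub>R b y y"
  by (simp add: bilinear_ladd[OF b] bilinear_radd[OF b] bilinear_lmul[OF b] bilinear_rmul[OF b]
      scaleR_add_right)

lemma bilinear_mixed_Basis_if_orthogonality_preserving:
  fixes b :: "'a::euclidean_space \<Rightarrow> 'a \<Rightarrow> 'a"
  assumes b: "bilinear b" and orth: "\<And>z x. z \<bullet> x = 0 \<Longrightarrow> z \<bullet> b x x = 0"
    and lk: "l \<in> Basis" "k \<in> Basis" "l \<noteq> k"
  shows "l \<bullet> (b l k + b k l) = k \<bullet> b k k"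
proof -
  have "l \<bullet> b k k = 0" "k \<bullet> b l l = 0"
    using orth[of l k] orth[of k l] lk by (simp_all add: inner_not_same_Basis)
  moreover have "(l - k) \<bullet> b (l + 1 *\<^sub>R k) (l + 1 *\<^sub>R k) = 0"
    using lk by (intro orth) (simp add: inner_simps inner_commute)
  moreover have "(l + k) \<bullet> b (l + (-1) *\<^sub>R k) (l + (-1) *\<^sub>R k) = 0"
    using lk by (intro orth) (simp add: inner_simps inner_commute)
  ultimately show ?thesis
    unfolding bilinear_diag_add_scaleR[OF b] by (simp add: inner_simps)
qed

lemma bilinear_polar_Basis_if_orthogonality_preserving:
  fixes b :: "'a::euclidean_space \<Rightarrow> 'a \<Rightarrow> 'a"
  assumes b: "bilinear b" and orth: "\<And>z x. z \<bullet> x = 0 \<Longrightarrow> z \<bullet> b x x = 0"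
    and ilk: "i \<in> Basis" "l \<in> Basis" "k \<in> Basis"
  shows "i \<bullet> (b l k + b k l) = (if i = l then k \<bullet> b k k else 0) + (if i = k then l \<bullet> b l l else 0)"
proof -
  have off_diag: "i \<bullet> b j j = 0" if "j \<in> Basis" "i \<noteq> j" for j
    using orth[of i j] ilk that by (simp add: inner_not_same_Basis)
  consider "l = k" | "l \<noteq> k" "i = l" | "l \<noteq> k" "i = k" | "l \<noteq> k" "i \<noteq> l" "i \<noteq> k"
    by blast
  then show ?thesis
  proof cases
    case 1
    then show ?thesis
      using off_diag[of l] ilk by (auto simp: inner_simps)
  next
    case 2
    then show ?thesis
      using bilinear_mixed_Basis_if_orthogonality_preserving[OF b orth, of l k] ilk by simp
  next
    case 3
    then show ?thesis
      using bilinear_mixed_Basis_if_orthogonality_preserving[OF b orth, of k l] ilk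
      by (simp add: add.commute)
  next
    case 4
    have "i \<bullet> b (l + 1 *\<^sub>R k) (l + 1 *\<^sub>R k) = 0"
      using ilk 4 by (intro orth) (simp add: inner_simps inner_not_same_Basis)
    then show ?thesis
      unfolding bilinear_diag_add_scaleR[OF b] using ilk 4 off_diag[of l] off_diag[of k]
      by (simp add: inner_simps)
  qed
qed

lemma bilinear_diag_eq_scaleR_if_orthogonality_preserving:
  fixes b :: "'a::euclidean_space \<Rightarrow> 'a \<Rightarrow> 'a"
  assumes b: "bilinear b" and orth: "\<And>z x. z \<bullet> x = 0 \<Longrightarrow> z \<bullet> b x x = 0"
  shows "\<exists>d. \<forall>x. b x x = (d \<bullet> x) *\<^sub>R x"
proof -
  define d where "d = (\<Sum>j\<in>Basis. (j \<bullet> b j j) *\<^sub>R j)"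
  have d_Basis: "d \<bullet> j = j \<bullet> b j j" if "j \<in> Basis" for j
    using that by (simp add: d_def inner_sum_left inner_Basis if_distrib cong: if_cong)
  define c where "c x y = b x y - (d \<bullet> x) *\<^sub>R y" for x y
  have "bilinear (\<lambda>x y. c x y + c y x)"
    unfolding bilinear_def c_def
    by (auto intro!: linearI simp: bilinear_ladd[OF b] bilinear_radd[OF b] bilinear_lmul[OF b]
        bilinear_rmul[OF b] inner_add_left inner_scaleR_left algebra_simps)
  then have "(\<lambda>x y. c x y + c y x) = (\<lambda>x y. 0)"
  proof (rule bilinear_eq_stdbasis)
    show "bilinear (\<lambda>(x::'a) (y::'a). 0::'a)"
      by (simp add: bilinear_def linear_zero)
    fix l k :: 'a
    assume lk: "l \<in> Basis" "k \<in> Basis"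
    show "c l k + c k l = 0"
    proof (rule euclidean_eqI)
      fix i :: 'a
      assume "i \<in> Basis"
      then show "(c l k + c k l) \<bullet> i = 0 \<bullet> i"
        using bilinear_polar_Basis_if_orthogonality_preserving[OF b orth \<open>i \<in> Basis\<close> lk]
          d_Basis[OF lk(1)] d_Basis[OF lk(2)] lk
        by (auto simp: c_def inner_simps inner_Basis inner_commute)
    qed
  qed
  then have "2 *\<^sub>R c x x = 0" for x
    by (metis scaleR_2)
  then show ?thesis
    by (auto simp: c_def)
qed

lemma bilinear_cross_terms_scalar_on_kernel:
  fixes L :: "'a::real_vector \<Rightarrow> 'b::euclidean_space" and b :: "'a \<Rightarrow> 'a \<Rightarrow> 'b"
  assumes L: "linear L" and W: "linear W" and LW: "\<And>\<alpha>. L (W \<alpha>) = \<alpha>" and b: "bilinear b"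
    and orth: "\<And>z r. z \<bullet> L r = 0 \<Longrightarrow> z \<bullet> b r r = 0"
  shows "\<exists>\<mu>. linear \<mu> \<and> (\<forall>y \<alpha>. L y = 0 \<longrightarrow> b y (W \<alpha>) + b (W \<alpha>) y = \<mu> y *\<^sub>R \<alpha>)"
proof -
  obtain j0 :: 'b where j0: "j0 \<in> Basis"
    using nonempty_Basis by blast
  define \<mu> where "\<mu> y = j0 \<bullet> (b y (W j0) + b (W j0) y)" for y
  have "linear \<mu>"
    unfolding \<mu>_def
    by (rule linearI) (simp_all add: bilinear_ladd[OF b] bilinear_radd[OF b] bilinear_lmul[OF b]
        bilinear_rmul[OF b] inner_add_right algebra_simps)
  moreover have "b y (W \<alpha>) + b (W \<alpha>) y = \<mu> y *\<^sub>R \<alpha>" if y: "L y = 0" for y \<alpha>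
  proof -
    have "linear (b y)" "linear (\<lambda>x. b x y)"
      using b by (simp_all add: bilinear_def)
    then have "linear (\<lambda>\<alpha>. b y (W \<alpha>) + b (W \<alpha>) y)"
      using linear_compose_add[OF linear_compose[OF W] linear_compose[OF W]] by (simp add: o_def)
    moreover have "z \<bullet> (b y (W \<alpha>) + b (W \<alpha>) y) = 0" if "z \<bullet> \<alpha> = 0" for z \<alpha>
    proof -
      have "L (y + W \<alpha>) = \<alpha>"
        using y LW linear_add[OF L] by simp
      then have "z \<bullet> b (y + W \<alpha>) (y + W \<alpha>) = 0" and "z \<bullet> b (W \<alpha>) (W \<alpha>) = 0"
        and "b y y = 0"
        using orth[of z] orth[of "b y y" y] that LW y by auto
      then show ?thesis
        by (simp add: bilinear_ladd[OF b] bilinear_radd[OF b] inner_simps)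
    qed
    ultimately obtain m where "\<And>\<alpha>. b y (W \<alpha>) + b (W \<alpha>) y = m *\<^sub>R \<alpha>"
      using linear_eq_scaleR_if_orthogonality_preserving by blast
    moreover from this have "\<mu> y = m"
      using j0 by (simp add: \<mu>_def)
    ultimately show ?thesis
      by simp
  qed
  ultimately show ?thesis
    by blast
qed

lemma bilinear_diag_factors_through_surjective:
  fixes L :: "'a::real_vector \<Rightarrow> 'b::euclidean_space" and b :: "'a \<Rightarrow> 'a \<Rightarrow> 'b"
  assumes L: "linear L" "surj L" and b: "bilinear b"
    and orth: "\<And>z r. z \<bullet> L r = 0 \<Longrightarrow> z \<bullet> b r r = 0"
  shows "\<exists>\<phi>. linear \<phi> \<and> (\<forall>r. b r r = \<phi> r *\<^sub>R L r)"
proof -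
  obtain W where W: "linear W" and LW: "\<And>\<alpha>. L (W \<alpha>) = \<alpha>"
    using real_vector.linear_surjective_right_inverse[OF L] by (metis comp_apply id_apply)
  have "bilinear (\<lambda>\<alpha> \<beta>. b (W \<alpha>) (W \<beta>))"
    using b W unfolding bilinear_def by (auto intro: linear_compose[unfolded o_def])
  moreover have "z \<bullet> b (W \<alpha>) (W \<alpha>) = 0" if "z \<bullet> \<alpha> = 0" for z \<alpha>
    using orth[of z "W \<alpha>"] that LW by simp
  ultimately obtain d where d: "\<And>\<alpha>. b (W \<alpha>) (W \<alpha>) = (d \<bullet> \<alpha>) *\<^sub>R \<alpha>"
    using bilinear_diag_eq_scaleR_if_orthogonality_preserving[of "\<lambda>\<alpha> \<beta>. b (W \<alpha>) (W \<beta>)"]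
    by blast
  obtain \<mu> where "linear \<mu>" and cross: "\<And>y \<alpha>. L y = 0 \<Longrightarrow> b y (W \<alpha>) + b (W \<alpha>) y = \<mu> y *\<^sub>R \<alpha>"
    using bilinear_cross_terms_scalar_on_kernel[OF L(1) W LW b orth] by blast
  define \<phi> where "\<phi> r = \<mu> (r - W (L r)) + d \<bullet> L r" for r
  have "linear (\<lambda>r. r - W (L r))"
    using linear_compose_sub[OF linear_id linear_compose[OF L(1) W]] by (simp add: o_def)
  moreover have "linear (\<lambda>r. d \<bullet> L r)"
    using linear_compose[OF L(1) bounded_linear.linear[OF bounded_linear_inner_right]] by (simp add: o_def)
  ultimately have "linear \<phi>"
    unfolding \<phi>_def using linear_compose_add[OF linear_compose[OF _ \<open>linear \<mu>\<close>]] by (simp add: o_def)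
  moreover have "b r r = \<phi> r *\<^sub>R L r" for r
  proof -
    define y where "y = r - W (L r)"
    have y: "L y = 0"
      using LW linear_diff[OF L(1)] by (simp add: y_def)
    then have "b y y = 0"
      using orth[of "b y y" y] by simp
    have "b r r = b (y + W (L r)) (y + W (L r))"
      by (simp add: y_def)
    also have "\<dots> = b y y + (b y (W (L r)) + b (W (L r)) y) + b (W (L r)) (W (L r))"
      by (simp add: bilinear_ladd[OF b] bilinear_radd[OF b])
    also have "\<dots> = \<phi> r *\<^sub>R L r"
      unfolding \<open>b y y = 0\<close> cross[OF y] d by (simp add: \<phi>_def y_def scaleR_add_left)
    finally show ?thesis .
  qed
  ultimately show ?thesis
    by blast
qed

lemma norm_le_if_quadratic_eq_0:
  fixes x a :: "'a::real_inner"
  assumes "(norm x)\<^sup>2 + x \<bullet> a + s = 0"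
  shows "norm x \<le> 1 + norm a + \<bar>s\<bar>"
proof (cases "norm x \<le> 1")
  case False
  then have pos: "0 < norm x"
    by linarith
  have "norm x * norm x \<le> norm x * norm a + \<bar>s\<bar>"
    using assms Cauchy_Schwarz_ineq2[of x a] abs_ge_minus_self[of s]
    unfolding power2_eq_square abs_le_iff by linarith
  also have "\<dots> \<le> norm x * norm a + norm x * \<bar>s\<bar>"
    using False mult_right_mono[of 1 "norm x" "\<bar>s\<bar>"] by simp
  finally have "norm x * norm x \<le> norm x * (norm a + \<bar>s\<bar>)"
    by (simp only: distrib_left)
  then have "norm x \<le> norm a + \<bar>s\<bar>"
    using pos by (simp only: mult_le_cancel_left_pos)
  then show ?thesis
    by simp
qed (use norm_ge_zero[of a] abs_ge_zero[of s] in linarith)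

lemma det_nonzero_if_rank_one_perturbation:
  fixes M :: "real^'n^'n"
  assumes M: "\<And>x. M *v x = (e \<bullet> x) *\<^sub>R u + \<epsilon> *\<^sub>R x" and "\<epsilon> \<noteq> 0" "\<epsilon> + e \<bullet> u \<noteq> 0"
  shows "det M \<noteq> 0"
proof -
  have "x = 0" if "M *v x = 0" for x
  proof -
    have eq: "(e \<bullet> x) *\<^sub>R u + \<epsilon> *\<^sub>R x = 0"
      using that M by simp
    have "e \<bullet> ((e \<bullet> x) *\<^sub>R u + \<epsilon> *\<^sub>R x) = (e \<bullet> x) * (\<epsilon> + e \<bullet> u)"
      by (simp add: inner_add_right algebra_simps)
    with eq have "(e \<bullet> x) * (\<epsilon> + e \<bullet> u) = 0"
      by simp
    then have "e \<bullet> x = 0"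
      using assms by simp
    then show "x = 0"
      using eq \<open>\<epsilon> \<noteq> 0\<close> by simp
  qed
  then obtain N where "N ** M = mat 1"
    using matrix_left_invertible_ker by blast
  then show ?thesis
    using invertible_det_nz invertible_left_inverse by blast
qed

lemma isCont_eq_0_if_bounded_by_linear_at_right:
  fixes F K :: "real \<Rightarrow> real"
  assumes F: "isCont F 0" and K: "isCont K 0"
    and bound: "eventually (\<lambda>\<epsilon>. \<bar>F \<epsilon>\<bar> \<le> \<epsilon> * K \<epsilon>) (at_right 0)"
  shows "F 0 = 0"
proof -
  have "(K \<longlongrightarrow> K 0) (at_right 0)"
    using K by (simp add: isCont_def filterlim_at_split)
  then have "((\<lambda>\<epsilon>. \<epsilon> * K \<epsilon>) \<longlongrightarrow> 0) (at_right 0)"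
    using tendsto_mult[OF tendsto_ident_at] by fastforce
  then have "(F \<longlongrightarrow> 0) (at_right 0)"
    using bound by (intro Lim_null_comparison[of F]) simp_all
  moreover have "(F \<longlongrightarrow> F 0) (at_right 0)"
    using F by (simp add: isCont_def filterlim_at_split)
  ultimately show ?thesis
    using tendsto_unique[OF trivial_limit_at_right_real] by blast
qed

definition rhs_form :: "('n \<Rightarrow> 'm \<Rightarrow> 'm \<Rightarrow> real) \<Rightarrow> real^'m \<Rightarrow> real^'m \<Rightarrow> real^'n" where
  "rhs_form B x y = (\<chi> i. \<Sum>h\<in>UNIV. \<Sum>k\<in>UNIV. B i h k * x $ h * y $ k)"

lemma bilinear_rhs_form: "bilinear (rhs_form B)"
  unfolding bilinear_def rhs_form_def
  by (auto intro!: linearI simp: vec_eq_iff distrib_left distrib_right sum.distrib sum_distrib_left mult_ac)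

lemma rhs_eq_sum_rhs_form: "rhs B v = (\<Sum>l\<in>UNIV. rhs_form B (column l v) (column l v))"
proof -
  have "sp_comb (B i) v = (\<Sum>l\<in>UNIV. rhs_form B (column l v) (column l v) $ i)" for i
  proof -
    have "sp_comb (B i) v = (\<Sum>h\<in>UNIV. \<Sum>k\<in>UNIV. \<Sum>l\<in>UNIV. B i h k * v $ h $ l * v $ k $ l)"
      by (simp add: sp_comb_def inner_vec_def sum_distrib_left mult.assoc)
    also have "\<dots> = (\<Sum>h\<in>UNIV. \<Sum>l\<in>UNIV. \<Sum>k\<in>UNIV. B i h k * v $ h $ l * v $ k $ l)"
      by (rule sum.cong[OF refl], rule sum.swap)
    also have "\<dots> = (\<Sum>l\<in>UNIV. \<Sum>h\<in>UNIV. \<Sum>k\<in>UNIV. B i h k * v $ h $ l * v $ k $ l)"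
      by (rule sum.swap)
    also have "\<dots> = (\<Sum>l\<in>UNIV. rhs_form B (column l v) (column l v) $ i)"
      by (simp add: rhs_form_def column_def)
    finally show ?thesis .
  qed
  then show ?thesis
    by (simp add: vec_eq_iff rhs_def sum_component)
qed

lemma tmat_eq_matrix_mult: "tmat A v = A ** v"
  by (simp add: tmat_def matrix_matrix_mult_def vec_eq_iff sum_component)

lemma cramer_sol_solves:
  assumes "det (tmat A v) \<noteq> 0"
  shows "tmat A v *v cramer_sol A B v = rhs B v"
  using cramer[OF assms] by (simp add: cramer_sol_def cramer_num_def)

lemma tmat_perturbed_mult:
  assumes "A ** S = mat 1"
  shows "tmat A ((\<chi> j. r $ j *\<^sub>R e) + \<epsilon> *\<^sub>R S) *v x = (e \<bullet> x) *\<^sub>R (A *v r) + \<epsilon> *\<^sub>R x"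
proof -
  have "((\<chi> j. r $ j *\<^sub>R e) + \<epsilon> *\<^sub>R S) *v x = (e \<bullet> x) *\<^sub>R r + \<epsilon> *\<^sub>R (S *v x)"
    by (simp add: vec_eq_iff matrix_vector_mult_def inner_vec_def distrib_left sum.distrib
        sum_distrib_left sum_distrib_right mult_ac)
  then have "tmat A ((\<chi> j. r $ j *\<^sub>R e) + \<epsilon> *\<^sub>R S) *v x = A *v ((e \<bullet> x) *\<^sub>R r + \<epsilon> *\<^sub>R (S *v x))"
    by (simp add: tmat_eq_matrix_mult matrix_vector_mul_assoc[symmetric])
  also have "\<dots> = (e \<bullet> x) *\<^sub>R (A *v r) + \<epsilon> *\<^sub>R x"
    using assms by (simp add: matrix_vector_right_distrib matrix_vector_mult_scaleR matrix_vector_mul_assoc)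
  finally show ?thesis .
qed

lemma abs_inner_rhs_le_if_perturbed:
  assumes sphere: "(norm (cramer_sol A B v))\<^sup>2 + cramer_sol A B v \<bullet> a + s = 0"
    and det: "det (tmat A v) \<noteq> 0"
    and T: "\<And>x. tmat A v *v x = (e \<bullet> x) *\<^sub>R u + \<epsilon> *\<^sub>R x"
    and zu: "z \<bullet> u = 0" and "0 \<le> \<epsilon>"
  shows "\<bar>z \<bullet> rhs B v\<bar> \<le> \<epsilon> * (norm z * (1 + norm a + \<bar>s\<bar>))"
proof -
  define x where "x = cramer_sol A B v"
  have "z \<bullet> rhs B v = z \<bullet> ((e \<bullet> x) *\<^sub>R u + \<epsilon> *\<^sub>R x)"
    using cramer_sol_solves[OF det, of B] by (simp add: x_def T)
  also have "\<dots> = \<epsilon> * (z \<bullet> x)"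
    using zu by (simp add: inner_add_right)
  finally have "\<bar>z \<bullet> rhs B v\<bar> = \<epsilon> * \<bar>z \<bullet> x\<bar>"
    using \<open>0 \<le> \<epsilon>\<close> by (simp add: abs_mult)
  also have "\<dots> \<le> \<epsilon> * (norm z * norm x)"
    using \<open>0 \<le> \<epsilon>\<close> Cauchy_Schwarz_ineq2 by (intro mult_left_mono) auto
  also have "\<dots> \<le> \<epsilon> * (norm z * (1 + norm a + \<bar>s\<bar>))"
    using \<open>0 \<le> \<epsilon>\<close> norm_le_if_quadratic_eq_0[OF sphere] by (intro mult_left_mono) (auto simp: x_def)
  finally show ?thesis .
qed

lemma rhs_form_diag_orthogonal:
  fixes A :: "real^'m^'n"
    and B :: "'n \<Rightarrow> 'm \<Rightarrow> 'm \<Rightarrow> real"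
    and c :: "'m \<Rightarrow> real"
    and beta :: "'m \<Rightarrow> 'm \<Rightarrow> real"
  assumes surj: "surj ((*v) A)"
    and ident: "\<forall>v :: (real^'n)^'m. det (tmat A v) \<noteq> 0 \<longrightarrow>
        (let x = cramer_sol A B v
         in (norm x)\<^sup>2 + x \<bullet> (\<Sum>j\<in>UNIV. c j *\<^sub>R (v $ j)) + sp_comb beta v = 0)"
    and zr: "z \<bullet> (A *v r) = 0"
  shows "z \<bullet> rhs_form B r r = 0"
proof -
  obtain S where AS: "A ** S = mat 1"
    using surj matrix_right_invertible_surjective by blast
  obtain e :: "real^'n" where "norm e = 1"
    using vector_choose_size zero_le_one by blast
  then have ee: "e \<bullet> e = 1"
    by (simp add: dot_square_norm)
  define V where "V \<epsilon> = (\<chi> j. r $ j *\<^sub>R e) + \<epsilon> *\<^sub>R S" for \<epsilon>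
  define F where "F \<epsilon> = z \<bullet> rhs B (V \<epsilon>)" for \<epsilon>
  define K where "K \<epsilon> = norm z * (1 + norm (\<Sum>j\<in>UNIV. c j *\<^sub>R V \<epsilon> $ j) + \<bar>sp_comb beta (V \<epsilon>)\<bar>)"
    for \<epsilon>
  have T: "tmat A (V \<epsilon>) *v x = (e \<bullet> x) *\<^sub>R (A *v r) + \<epsilon> *\<^sub>R x" for \<epsilon> x
    unfolding V_def by (rule tmat_perturbed_mult[OF AS])
  have "eventually (\<lambda>\<epsilon>. 0 < \<epsilon> \<and> \<epsilon> \<noteq> - (e \<bullet> (A *v r))) (at_right 0)"
    by (intro eventually_conj eventually_at_right_less eventually_neq_at_within)
  then have bound: "eventually (\<lambda>\<epsilon>. \<bar>F \<epsilon>\<bar> \<le> \<epsilon> * K \<epsilon>) (at_right 0)"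
  proof (rule eventually_mono)
    fix \<epsilon> :: real
    assume \<epsilon>: "0 < \<epsilon> \<and> \<epsilon> \<noteq> - (e \<bullet> (A *v r))"
    then have det: "det (tmat A (V \<epsilon>)) \<noteq> 0"
      by (intro det_nonzero_if_rank_one_perturbation[OF T]) auto
    show "\<bar>F \<epsilon>\<bar> \<le> \<epsilon> * K \<epsilon>"
      unfolding F_def K_def
      using abs_inner_rhs_le_if_perturbed[OF ident[rule_format, OF det, unfolded Let_def] det T zr] \<epsilon>
      by simp
  qed
  have "F = (\<lambda>\<epsilon>. \<Sum>i\<in>UNIV. z $ i * sp_comb (B i) (V \<epsilon>))"
    by (simp add: fun_eq_iff F_def rhs_def inner_vec_def)
  then have "isCont F 0"
    unfolding sp_comb_def V_def by (simp only:) (intro continuous_intros isCont_vec_nth)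
  moreover have "isCont K 0"
    unfolding K_def sp_comb_def V_def by (intro continuous_intros isCont_vec_nth)
  ultimately have "F 0 = 0"
    using isCont_eq_0_if_bounded_by_linear_at_right bound by blast
  moreover have "rhs B (V 0) = rhs_form B r r"
    using ee by (simp add: V_def rhs_def rhs_form_def sp_comb_def vec_eq_iff mult_ac)
  ultimately show ?thesis
    by (simp add: F_def)
qed

lemma rhs_eq_tmat_mult_if_factor:
  assumes factor: "\<And>r. rhs_form B r r = \<phi> r *\<^sub>R (A *v r)"
  shows "rhs B v = tmat A v *v (\<chi> l. \<phi> (column l v))"
proof -
  have "rhs B v = (\<Sum>l\<in>UNIV. \<phi> (column l v) *\<^sub>R (A *v column l v))"
    by (simp add: rhs_eq_sum_rhs_form factor)
  also have "\<dots> = A *v (\<Sum>l\<in>UNIV. \<phi> (column l v) *\<^sub>R column l v)"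
    by (simp add: linear_sum[OF matrix_vector_mul_linear] matrix_vector_mult_scaleR)
  also have "\<dots> = A *v (v *v (\<chi> l. \<phi> (column l v)))"
    by (simp add: matrix_mult_sum scalar_mult_eq_scaleR)
  also have "\<dots> = tmat A v *v (\<chi> l. \<phi> (column l v))"
    by (simp add: tmat_eq_matrix_mult matrix_vector_mul_assoc)
  finally show ?thesis .
qed

lemma real_polynomial_function_linear_column:
  fixes \<phi> :: "real^'m \<Rightarrow> real"
  assumes "linear \<phi>"
  shows "real_polynomial_function (\<lambda>v :: real^'n^'m. \<phi> (column k v))"
proof -
  have "linear (\<lambda>v :: real^'n^'m. column k v)"
    by (rule linearI) (simp_all add: column_def vec_eq_iff)
  then have "linear (\<lambda>v :: real^'n^'m. \<phi> (column k v))"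
    using linear_compose[OF _ assms] by (simp add: o_def)
  then show ?thesis
    by (simp add: linear_conv_bounded_linear real_polynomial_function.intros(1))
qed

theorem mainTheorem10:
  fixes A :: "real^'m^'n"
    and B :: "'n \<Rightarrow> 'm \<Rightarrow> 'm \<Rightarrow> real"
    and c :: "'m \<Rightarrow> real"
    and beta :: "'m \<Rightarrow> 'm \<Rightarrow> real"
  assumes rank: "rank A = CARD('n)"
    and ident: "\<forall>v :: (real^'n)^'m. det (tmat A v) \<noteq> 0 \<longrightarrow>
        (let x = cramer_sol A B v
         in (norm x)\<^sup>2 + x \<bullet> (\<Sum>j\<in>UNIV. c j *\<^sub>R (v $ j)) + sp_comb beta v = 0)"
  shows "\<forall>k. \<exists>g :: (real^'n)^'m \<Rightarrow> real. real_polynomial_function g \<and>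
           (\<forall>v. cramer_num A B k v = det (tmat A v) * g v)"
proof -
  have surj: "surj ((*v) A)"
    using rank full_rank_surjective by blast
  have orth: "\<And>z r. z \<bullet> (A *v r) = 0 \<Longrightarrow> z \<bullet> rhs_form B r r = 0"
    using rhs_form_diag_orthogonal[OF surj ident] .
  obtain \<phi> where "linear \<phi>" and factor: "\<And>r. rhs_form B r r = \<phi> r *\<^sub>R (A *v r)"
    using bilinear_diag_factors_through_surjective[OF matrix_vector_mul_linear surj bilinear_rhs_form orth]
    by blast
  show ?thesis
  proof (intro allI exI conjI)
    fix k :: 'n and v :: "(real^'n)^'m"
    show "real_polynomial_function (\<lambda>v. \<phi> (column k v))"
      using \<open>linear \<phi>\<close> by (rule real_polynomial_function_linear_column)
    show "cramer_num A B k v = det (tmat A v) * \<phi> (column k v)"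
      unfolding cramer_num_def rhs_eq_tmat_mult_if_factor[OF factor] cramer_lemma by simp
  qed
qed

end
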